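(* Consider the single-hop VAoI system described in the context, operated under the threshold policy with threshold $\Delta_T\in\{0,1,2,\dots\}$. Then the average VAoI is \[ \bar\Delta_{(\Delta_T)}=\frac12\,\frac{(\Delta_T-1)\Delta_T\,p_s}{(\Delta_T-1)p_s+\beta}+\frac{p_g}{p_s}, \] where $\beta=1-(1-p_s)(1-p_g)$.
   Context: Time is slotted, $t\in\{0,1,2,\dots\}$. An information source generates a new version in each slot independently with probability $p_g$; let $G_t\in\{0,1\}$ indicate whether a new version is generated in slot $t$. A transmitter holding the current source version may, in each slot $t$, attempt to send it to a receiver over an erasure channel; $a(t)\in\{0,1\}$ indicates an attempt, and each attempt succeeds independently with probability $p_s$. The Version Age of Information (VAoI) $\Delta(t)$ evolves as $\Delta(t+1)=G_t$ if $a(t)=1$ and the attempt succeeds, and $\Delta(t+1)=\Delta(t)+G_t$ otherwise. All version-generation and channel events are mutually independent. Assume $0<p_s<1$, $0<p_g<1$. The threshold policy with threshold $\Delta_T$ sets $a(t)=1$ iff $\Delta(t)\ge\Delta_T$. The average VAoI is $\bar\Delta_{(\Delta_T)}=\lim_{t\to\infty}\mathbb{E}[\Delta(t)]=\sum_{n\ge0}n\mu_n$, where $(\mu_n)$ is the stationary distribution of the (ergodic) Markov chain $\Delta(t)$. *)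

theory Defs
  imports Complex_Main
begin

text \<open>One-step transition probability of the VAoI Markov chain under the threshold
  policy with threshold T: from state n an attempt is made iff n \<ge> T.
  With an attempt: success (prob ps) leads to state G_t (0 w.p. 1-pg, 1 w.p. pg);
  failure (prob 1-ps) leads to n + G_t.  Without attempt: n + G_t.\<close>
definition vaoi_trans :: "real \<Rightarrow> real \<Rightarrow> nat \<Rightarrow> nat \<Rightarrow> nat \<Rightarrow> real" where
  "vaoi_trans ps pg T n m =
     (if T \<le> n then ps * ((if m = 0 then 1 - pg else 0) + (if m = 1 then pg else 0)) else 0)
     + (if T \<le> n then 1 - ps else 1)
       * ((if m = n then 1 - pg else 0) + (if m = Suc n then pg else 0))"

definition vaoi_stationary :: "real \<Rightarrow> real \<Rightarrow> nat \<Rightarrow> (nat \<Rightarrow> real) \<Rightarrow> bool" where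
  "vaoi_stationary ps pg T mu \<longleftrightarrow>
     (\<forall>n. 0 \<le> mu n) \<and> mu sums 1 \<and>
     (\<forall>m. (\<lambda>n. mu n * vaoi_trans ps pg T n m) sums mu m)"

end

theory Submission
  imports Defs
begin

text \<open>Let S be the stationary probability of the states n \<ge> T, in which the transmitter
  attempts. For T > 0 the balance equations force \<mu> to be constant, equal to p_s S / p_g,
  on 1 \<le> n < T, with \<mu>_0 = p_s (1 - p_g) S / p_g, and to decay geometrically with ratio
  (1 - p_s) p_g / \<beta> from \<mu>_T = p_s S / \<beta> on. Normalisation gives
  S = p_g / ((T - 1) p_s + \<beta>); the arithmetic head of the mean contributes the first
  summand and the arithmetico-geometric tail contributes exactly p_g / p_s. For T = 0 the
  tail starts at \<mu>_1 = p_s p_g / \<beta>^2 and again contributes p_g / p_s.\<close>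

lemma geometric_tail:
  assumes "\<And>j. f (K + Suc j) = r * f (K + j)"
  shows "f (K + j) = f K * (r :: 'a :: comm_monoid_mult) ^ j"
proof (induction j)
  case (Suc j)
  have "f (K + Suc j) = r * f (K + j)"
    by (rule assms)
  with Suc show ?case
    by (simp add: mult_ac)
qed simp

lemma sums_weighted_geometric_tail:
  fixes f :: "nat \<Rightarrow> 'a :: {real_normed_field, banach}"
  assumes tail: "\<And>j. f (K + j) = f K * r ^ j" and r: "norm r < 1"
  shows "(\<lambda>n. of_nat n * f n) sums
           ((\<Sum>n<K. of_nat n * f n) + f K * (1 / (1 - r)^2 + (of_nat K - 1) / (1 - r)))"
proof -
  have "(\<lambda>j. f K * (of_nat (Suc j) * r ^ j + (of_nat K - 1) * r ^ j))
          sums (f K * (1 / (1 - r)^2 + (of_nat K - 1) * (1 / (1 - r))))"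
    using r by (intro sums_mult sums_add geometric_deriv_sums sums_mult geometric_sums)
  moreover have "f K * (of_nat (Suc j) * r ^ j + (of_nat K - 1) * r ^ j) = of_nat (j + K) * f (j + K)" for j
    by (simp add: tail add.commute[of j] algebra_simps)
  ultimately have "(\<lambda>j. of_nat (j + K) * f (j + K))
                     sums (f K * (1 / (1 - r)^2 + (of_nat K - 1) / (1 - r)))"
    by simp
  then show ?thesis
    using sums_iff_shift[of "\<lambda>n. of_nat n * f n" K] by (simp add: add_ac)
qed

locale vaoi_threshold =
  fixes ps pg :: real and T :: nat and mu :: "nat \<Rightarrow> real"
  assumes ps_pos: "0 < ps" and ps_le_1: "ps \<le> 1" and pg_pos: "0 < pg"
    and stationary: "vaoi_stationary ps pg T mu"
begin

definition beta :: real where "beta = 1 - (1 - ps) * (1 - pg)"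

definition attempt_prob :: real where "attempt_prob = (\<Sum>n. if T \<le> n then mu n else 0)"

definition ratio :: real where "ratio = (1 - ps) * pg / beta"

lemma mu_nonneg: "0 \<le> mu n"
  using stationary by (simp add: vaoi_stationary_def)

lemma mu_sums_1: "mu sums 1"
  using stationary by (simp add: vaoi_stationary_def)

lemma beta_eq: "beta = ps + (1 - ps) * pg"
  unfolding beta_def by algebra

lemma beta_pos: "0 < beta"
  using beta_eq ps_pos ps_le_1 pg_pos by (simp add: add_pos_nonneg)

lemma ratio_nonneg: "0 \<le> ratio"
  unfolding ratio_def using ps_le_1 pg_pos beta_pos by simp

lemma one_minus_ratio: "1 - ratio = ps / beta"
  unfolding ratio_def using beta_pos beta_eq by (simp add: field_simps)

lemma ratio_less_1: "ratio < 1"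
  using one_minus_ratio divide_pos_pos[OF ps_pos beta_pos] by linarith

lemma attempt_prob_sums: "(\<lambda>n. if T \<le> n then mu n else 0) sums attempt_prob"
proof -
  have "summable (\<lambda>n. if T \<le> n then mu n else 0)"
    by (rule summable_comparison_test[of _ mu]) (use mu_nonneg mu_sums_1 in \<open>auto simp: sums_iff\<close>)
  then show ?thesis
    unfolding attempt_prob_def by (rule summable_sums)
qed

lemma balance:
  "mu m = ps * ((if m = 0 then 1 - pg else 0) + (if m = 1 then pg else 0)) * attempt_prob
     + (if T \<le> m then 1 - ps else 1) * (1 - pg) * mu m
     + (if 0 < m then (if T \<le> m - 1 then 1 - ps else 1) * pg * mu (m - 1) else 0)"
proof -
  define c where "c = ps * ((if m = 0 then 1 - pg else 0) + (if m = 1 then pg else 0))"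
  define stay where "stay n = (if T \<le> n then 1 - ps else 1) * (1 - pg) * mu n" for n
  define up where "up n = (if 0 < m then (if T \<le> n then 1 - ps else 1) * pg * mu n else 0)" for n
  have "mu n * vaoi_trans ps pg T n m =
      c * (if T \<le> n then mu n else 0) + (if n = m then stay n else 0) + (if n = m - 1 then up n else 0)"
    for n
    unfolding vaoi_trans_def c_def stay_def up_def
    by (cases "T \<le> n"; cases "m = n"; cases "m = Suc n"; cases "m = 0"; cases "m = 1")
       (auto simp: algebra_simps)
  moreover have "(\<lambda>n. c * (if T \<le> n then mu n else 0) + (if n = m then stay n else 0)
                      + (if n = m - 1 then up n else 0)) sums (c * attempt_prob + stay m + up (m - 1))"
    by (intro sums_add sums_mult attempt_prob_sums sums_single)
  moreover have "(\<lambda>n. mu n * vaoi_trans ps pg T n m) sums mu m"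
    using stationary by (simp add: vaoi_stationary_def)
  ultimately have "mu m = c * attempt_prob + stay m + up (m - 1)"
    using sums_unique2 by simp
  then show ?thesis
    unfolding c_def stay_def up_def by simp
qed

lemma tail_recurrence:
  assumes "T \<le> n" "0 < n"
  shows "mu (Suc n) = ratio * mu n"
proof -
  have "mu (Suc n) = (1 - ps) * (1 - pg) * mu (Suc n) + (1 - ps) * pg * mu n"
    using balance[of "Suc n"] assms by simp
  then have "beta * mu (Suc n) = (1 - ps) * pg * mu n"
    unfolding beta_def by algebra
  then show ?thesis
    unfolding ratio_def using beta_pos by (simp add: field_simps)
qed

lemma mean_sums_tail:
  assumes "T \<le> K" "0 < K"
  shows "(\<lambda>n. real n * mu n) sums
           ((\<Sum>n<K. real n * mu n) + mu K * beta * ((real K - 1) * ps + beta) / ps^2)"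
proof -
  have "mu (K + j) = mu K * ratio ^ j" for j
    by (rule geometric_tail) (use tail_recurrence assms in simp)
  then have "(\<lambda>n. real n * mu n) sums
      ((\<Sum>n<K. real n * mu n) + mu K * (1 / (1 - ratio)^2 + (real K - 1) / (1 - ratio)))"
    using ratio_nonneg ratio_less_1 by (intro sums_weighted_geometric_tail) auto
  also have "1 / (1 - ratio)^2 + (real K - 1) / (1 - ratio) = beta * ((real K - 1) * ps + beta) / ps^2"
    unfolding one_minus_ratio using ps_pos beta_pos by (simp add: field_simps power2_eq_square)
  finally show ?thesis
    by (simp add: mult.assoc)
qed

lemma mean_sums_threshold_0:
  assumes "T = 0"
  shows "(\<lambda>n. real n * mu n) sums (pg / ps)"
proof -
  have "attempt_prob = 1"
    using attempt_prob_sums mu_sums_1 assms by (simp add: sums_unique2)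
  then have "mu 0 = ps * (1 - pg) + (1 - ps) * (1 - pg) * mu 0"
    and "mu 1 = ps * pg + (1 - ps) * (1 - pg) * mu 1 + (1 - ps) * pg * mu 0"
    using balance[of 0] balance[of 1] assms by simp_all
  then have mu_0: "beta * mu 0 = ps * (1 - pg)"
    and mu_1: "beta * mu 1 = ps * pg + (1 - ps) * pg * mu 0"
    unfolding beta_def by algebra+
  have "beta^2 * mu 1 = beta * (beta * mu 1)"
    by (simp add: power2_eq_square)
  also have "\<dots> = beta * ps * pg + (1 - ps) * pg * (beta * mu 0)"
    unfolding mu_1 by (simp add: algebra_simps)
  also have "\<dots> = ps * pg * (beta + (1 - ps) * (1 - pg))"
    by (simp only: mu_0) (simp add: algebra_simps)
  also have "\<dots> = ps * pg"
    unfolding beta_def by simp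
  finally have "beta^2 * mu 1 = ps * pg" .
  then have "mu 1 * beta * ((real 1 - 1) * ps + beta) / ps^2 = pg / ps"
    using ps_pos by (simp add: power2_eq_square field_simps)
  then show ?thesis
    using mean_sums_tail[of 1] assms by simp
qed

lemma mass_split_at_threshold: "(\<Sum>n<T. mu n) + attempt_prob = 1"
proof -
  have "(\<lambda>n. (if n \<in> {..<T} then mu n else 0) + (if T \<le> n then mu n else 0))
          sums ((\<Sum>n<T. mu n) + attempt_prob)"
    by (intro sums_add sums_If_finite_set attempt_prob_sums) simp
  moreover have "(\<lambda>n. (if n \<in> {..<T} then mu n else 0) + (if T \<le> n then mu n else 0)) = mu"
    by auto
  ultimately show ?thesis
    using mu_sums_1 sums_unique2 by metis
qed

lemma mu_0_if_threshold_pos: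
  assumes "0 < T"
  shows "pg * mu 0 = ps * (1 - pg) * attempt_prob"
  using balance[of 0] assms by (simp, algebra)

lemma mu_below_threshold:
  assumes "0 < n" "n < T"
  shows "pg * mu n = ps * attempt_prob"
  using assms
proof (induction n rule: nat_induct_non_zero)
  case 1
  then have "pg * mu 1 = ps * pg * attempt_prob + pg * mu 0"
    using balance[of 1] by (simp, algebra)
  moreover have "pg * mu 0 = ps * (1 - pg) * attempt_prob"
    using 1 by (intro mu_0_if_threshold_pos) simp
  ultimately show ?case
    by (simp add: algebra_simps)
next
  case (Suc n)
  then have "pg * mu (Suc n) = pg * mu n"
    using balance[of "Suc n"] by (simp, algebra)
  with Suc show ?case
    by simp
qed

lemma mu_at_threshold:
  assumes "0 < T"
  shows "beta * mu T = ps * attempt_prob"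
proof (cases "T = 1")
  case True
  with assms have "T \<le> 1" "\<not> T \<le> 0"
    by simp_all
  then have "beta * mu 1 = ps * pg * attempt_prob + pg * mu 0"
    using balance[of 1] unfolding beta_def by simp algebra
  with True show ?thesis
    using mu_0_if_threshold_pos by (simp add: algebra_simps)
next
  case False
  moreover have "\<not> T \<le> T - 1"
    using assms by simp
  ultimately have "mu T = (1 - ps) * (1 - pg) * mu T + pg * mu (T - 1)"
    using balance[of T] assms by simp
  then have "beta * mu T = pg * mu (T - 1)"
    unfolding beta_def by algebra
  with False assms show ?thesis
    using mu_below_threshold[of "T - 1"] by simp
qed

lemma sum_mu_below:
  assumes "0 < k" "k \<le> T"
  shows "pg * (\<Sum>n<k. mu n) = ps * attempt_prob * (real k - pg)"
  using assms
proof (induction k rule: nat_induct_non_zero)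
  case 1
  then show ?case
    using mu_0_if_threshold_pos by (simp add: algebra_simps)
next
  case (Suc k)
  then show ?case
    using mu_below_threshold[of k] by (simp add: algebra_simps)
qed

lemma weighted_sum_mu_below:
  assumes "0 < k" "k \<le> T"
  shows "pg * (\<Sum>n<k. real n * mu n) = ps * attempt_prob * real k * (real k - 1) / 2"
  using assms
proof (induction k rule: nat_induct_non_zero)
  case (Suc k)
  have "pg * (\<Sum>n<Suc k. real n * mu n) = pg * (\<Sum>n<k. real n * mu n) + real k * (pg * mu k)"
    by (simp add: algebra_simps)
  also have "\<dots> = ps * attempt_prob * real k * (real k - 1) / 2 + real k * (ps * attempt_prob)"
    using Suc mu_below_threshold[of k] by simp
  finally show ?case
    by (simp add: field_simps)
qed simp

lemma attempt_prob_eq: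
  assumes "0 < T"
  shows "attempt_prob * ((real T - 1) * ps + beta) = pg"
proof -
  have "pg = pg * (\<Sum>n<T. mu n) + pg * attempt_prob"
    using mass_split_at_threshold by (metis distrib_left mult.right_neutral)
  also have "\<dots> = attempt_prob * ((real T - 1) * ps + beta)"
    using sum_mu_below[of T] assms unfolding beta_eq by (simp add: algebra_simps)
  finally show ?thesis ..
qed

lemma mean_sums_threshold_pos:
  assumes "0 < T"
  shows "(\<lambda>n. real n * mu n) sums
           (1/2 * ((real T - 1) * real T * ps / ((real T - 1) * ps + beta)) + pg / ps)"
proof -
  define D where "D = (real T - 1) * ps + beta"
  have "0 < D"
    unfolding D_def using assms ps_pos beta_pos by (simp add: add_nonneg_pos)
  have SD: "attempt_prob * D = pg"
    unfolding D_def using attempt_prob_eq assms .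
  then have S: "attempt_prob = pg / D"
    using \<open>0 < D\<close> by (simp add: field_simps)
  have "pg * (\<Sum>n<T. real n * mu n) = pg * (1/2 * ((real T - 1) * real T * ps / D))"
    using weighted_sum_mu_below[of T] assms unfolding S by (simp add: field_simps)
  then have "(\<Sum>n<T. real n * mu n) = 1/2 * ((real T - 1) * real T * ps / D)"
    using pg_pos by (metis mult_left_cancel less_irrefl)
  moreover have "mu T * beta * D / ps^2 = pg / ps"
    using mu_at_threshold assms ps_pos by (simp add: power2_eq_square mult.commute flip: SD)
  ultimately show ?thesis
    using mean_sums_tail[of T] assms unfolding D_def by simp
qed

end

theorem lemma2:
  fixes ps pg :: real and T :: nat and mu :: "nat \<Rightarrow> real"
  assumes "0 < ps" "ps < 1" "0 < pg" "pg < 1"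
    and "vaoi_stationary ps pg T mu"
  shows "(\<lambda>n. real n * mu n) sums
           (1/2 * ((real T - 1) * real T * ps / ((real T - 1) * ps + (1 - (1 - ps) * (1 - pg))))
            + pg / ps)"
proof -
  interpret vaoi_threshold ps pg T mu
    using assms by unfold_locales simp_all
  show ?thesis
  proof (cases "T = 0")
    case True
    then show ?thesis
      using mean_sums_threshold_0 by simp
  next
    case False
    then show ?thesis
      using mean_sums_threshold_pos unfolding beta_def by simp
  qed
qed

end
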